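(* Let $A\in\{0,1\}^{n\times n}$ be the adjacency matrix of a simple undirected graph $G$ on $n\ge 2$ vertices with no isolated vertex, let $\deg_j$ denote the degree of vertex $j$, and let $A_s=A-\frac{1}{n}\mathbb{1}_n\mathbb{1}_n^\top A$, i.e. $(A_s)_{ij}=A_{ij}-\deg_j/n$. Let $\mathcal{G}_s$ be the signed graph on the vertex set of $G$ in which distinct vertices $i,j$ are joined by an edge whose sign is the sign of $(A_s)_{ij}$ (this sign is symmetric in $i,j$ and nonzero). If $\mathcal{G}_s$ is weakly structurally balanced, then $G$ is a disjoint union of complete graphs with no edges between them, namely the parts of the balancing partition.
   Context: A signed graph is weakly structurally balanced if there is a partition $V=V_1\cup\dots\cup V_m$, $m\ge 2$, into nonempty mutually disjoint sets such that every edge between different $V_i$'s is negative and every edge within each $V_i$ is positive. $\mathbb{1}_n$ is the all-ones vector of length $n$. *)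

theory Defs
  imports Complex_Main
begin

definition is_simple_adj :: "nat \<Rightarrow> (nat \<Rightarrow> nat \<Rightarrow> real) \<Rightarrow> bool" where
  "is_simple_adj n A \<longleftrightarrow>
     (\<forall>i<n. \<forall>j<n. A i j \<in> {0, 1}) \<and>
     (\<forall>i<n. \<forall>j<n. A i j = A j i) \<and>
     (\<forall>i<n. A i i = 0)"

definition deg :: "nat \<Rightarrow> (nat \<Rightarrow> nat \<Rightarrow> real) \<Rightarrow> nat \<Rightarrow> real" where
  "deg n A j = (\<Sum>i<n. A i j)"

definition no_isolated :: "nat \<Rightarrow> (nat \<Rightarrow> nat \<Rightarrow> real) \<Rightarrow> bool" where
  "no_isolated n A \<longleftrightarrow> (\<forall>j<n. \<exists>i<n. A i j = 1)"

definition A_s :: "nat \<Rightarrow> (nat \<Rightarrow> nat \<Rightarrow> real) \<Rightarrow> nat \<Rightarrow> nat \<Rightarrow> real" where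
  "A_s n A i j = A i j - deg n A j / real n"

definition balancing_partition ::
  "'a set \<Rightarrow> ('a \<Rightarrow> 'a \<Rightarrow> bool) \<Rightarrow> ('a \<Rightarrow> 'a \<Rightarrow> real) \<Rightarrow> 'a set set \<Rightarrow> bool" where
  "balancing_partition V E sigma P \<longleftrightarrow>
     finite P \<and> card P \<ge> 2 \<and> \<Union>P = V \<and> (\<forall>X\<in>P. X \<noteq> {}) \<and>
     (\<forall>X\<in>P. \<forall>Y\<in>P. X \<noteq> Y \<longrightarrow> X \<inter> Y = {}) \<and>
     (\<forall>X\<in>P. \<forall>Y\<in>P. \<forall>i\<in>X. \<forall>j\<in>Y. E i j \<longrightarrow>
         (X = Y \<longrightarrow> sigma i j > 0) \<and> (X \<noteq> Y \<longrightarrow> sigma i j < 0))"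

definition weakly_structurally_balanced ::
  "'a set \<Rightarrow> ('a \<Rightarrow> 'a \<Rightarrow> bool) \<Rightarrow> ('a \<Rightarrow> 'a \<Rightarrow> real) \<Rightarrow> bool" where
  "weakly_structurally_balanced V E sigma \<longleftrightarrow> (\<exists>P. balancing_partition V E sigma P)"

definition Gs_edge :: "nat \<Rightarrow> nat \<Rightarrow> bool" where
  "Gs_edge i j \<longleftrightarrow> i \<noteq> j"

definition Gs_sign :: "nat \<Rightarrow> (nat \<Rightarrow> nat \<Rightarrow> real) \<Rightarrow> nat \<Rightarrow> nat \<Rightarrow> real" where
  "Gs_sign n A i j = sgn (A_s n A i j)"

definition union_of_cliques :: "(nat \<Rightarrow> nat \<Rightarrow> real) \<Rightarrow> nat set set \<Rightarrow> bool" where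
  "union_of_cliques A P \<longleftrightarrow>
     (\<forall>X\<in>P. \<forall>Y\<in>P. \<forall>i\<in>X. \<forall>j\<in>Y. i \<noteq> j \<longrightarrow> (A i j = 1 \<longleftrightarrow> X = Y))"

end

theory Submission
  imports Defs
begin

text \<open>Since G has no isolated vertex and no loops, every degree lies strictly between 0 and n,
  so (A_s)_{ij} = A_{ij} - deg_j/n is positive exactly on the edges of G and negative elsewhere.
  Thus G_s is the complete graph on the vertices with positive edges exactly those of G, and a
  balancing partition forces adjacency to coincide with lying in the same part.\<close>

lemma deg_ge_1:
  assumes "is_simple_adj n A" "no_isolated n A" "j < n"
  shows "1 \<le> deg n A j"
proof -
  obtain k where k: "k < n" "A k j = 1"
    using assms(2,3) unfolding no_isolated_def by blast
  have "A k j \<le> (\<Sum>i<n. A i j)"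
  proof (rule member_le_sum)
    fix i assume "i \<in> {..<n} - {k}"
    then have "A i j \<in> {0, 1}" using assms(1,3) unfolding is_simple_adj_def by blast
    then show "0 \<le> A i j" by auto
  qed (use k in auto)
  then show ?thesis using k unfolding deg_def by simp
qed

lemma deg_le_n_minus_1:
  assumes "is_simple_adj n A" "j < n"
  shows "deg n A j \<le> real n - 1"
proof -
  have "deg n A j = A j j + (\<Sum>i\<in>{..<n}-{j}. A i j)"
    using assms(2) unfolding deg_def by (simp add: sum.remove)
  also have "A j j = 0" using assms unfolding is_simple_adj_def by blast
  also have "(\<Sum>i\<in>{..<n}-{j}. A i j) \<le> (\<Sum>i\<in>{..<n}-{j}. 1)"
  proof (rule sum_mono)
    fix i assume "i \<in> {..<n}-{j}"
    then have "A i j \<in> {0, 1}" using assms unfolding is_simple_adj_def by blast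
    then show "A i j \<le> 1" by auto
  qed
  also have "(\<Sum>i\<in>{..<n}-{j}. (1::real)) = real n - 1"
    using assms(2) by (simp add: of_nat_diff)
  finally show ?thesis by simp
qed

lemma Gs_sign_eq:
  assumes "is_simple_adj n A" "no_isolated n A" "i < n" "j < n"
  shows "Gs_sign n A i j = (if A i j = 1 then 1 else -1)"
proof -
  have n_pos: "0 < real n" using assms(4) by simp
  have "0 < deg n A j / real n"
    using deg_ge_1[OF assms(1,2,4)] n_pos by simp
  moreover have "deg n A j / real n < 1"
    using deg_le_n_minus_1[OF assms(1,4)] n_pos by (simp add: divide_less_eq)
  moreover have "A i j \<in> {0, 1}"
    using assms(1,3,4) unfolding is_simple_adj_def by blast
  ultimately have "if A i j = 1 then 0 < A_s n A i j else A_s n A i j < 0"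
    unfolding A_s_def by auto
  then show ?thesis
    unfolding Gs_sign_def by (simp split: if_splits)
qed

lemma balancing_partition_part_subset:
  assumes "balancing_partition V E sigma P" "X \<in> P"
  shows "X \<subseteq> V"
proof -
  have "\<Union>P = V" using assms(1) unfolding balancing_partition_def by (elim conjE)
  then show ?thesis using assms(2) by blast
qed

lemma balancing_partition_complete_sign_pos_iff:
  assumes "balancing_partition V (\<lambda>i j. i \<noteq> j) sigma P"
    and "X \<in> P" "Y \<in> P" "i \<in> X" "j \<in> Y" "i \<noteq> j"
  shows "0 < sigma i j \<longleftrightarrow> X = Y"
proof -
  have "\<forall>X\<in>P. \<forall>Y\<in>P. \<forall>i\<in>X. \<forall>j\<in>Y. i \<noteq> j \<longrightarrow>
         (X = Y \<longrightarrow> 0 < sigma i j) \<and> (X \<noteq> Y \<longrightarrow> sigma i j < 0)"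
    using assms(1) unfolding balancing_partition_def by (elim conjE)
  then have "(X = Y \<longrightarrow> 0 < sigma i j) \<and> (X \<noteq> Y \<longrightarrow> sigma i j < 0)"
    using assms(2-6) by blast
  then show ?thesis by auto
qed

theorem mainTheorem6:
  fixes n :: nat and A :: "nat \<Rightarrow> nat \<Rightarrow> real"
  assumes "n \<ge> 2"
    and "is_simple_adj n A"
    and "no_isolated n A"
    and "weakly_structurally_balanced {..<n} Gs_edge (Gs_sign n A)"
  shows "(\<exists>P. balancing_partition {..<n} Gs_edge (Gs_sign n A) P \<and> union_of_cliques A P) \<and>
         (\<forall>P. balancing_partition {..<n} Gs_edge (Gs_sign n A) P \<longrightarrow> union_of_cliques A P)"
proof -
  have complete: "Gs_edge = (\<lambda>i j. i \<noteq> j)"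
    unfolding Gs_edge_def by (intro ext) simp
  have cliques: "union_of_cliques A P"
    if P: "balancing_partition {..<n} Gs_edge (Gs_sign n A) P" for P
    unfolding union_of_cliques_def
  proof (intro ballI impI)
    fix X Y i j assume XY: "X \<in> P" "Y \<in> P" "i \<in> X" "j \<in> Y" "i \<noteq> j"
    have "i < n" "j < n"
      using balancing_partition_part_subset[OF P] XY by blast+
    then have "0 < Gs_sign n A i j \<longleftrightarrow> A i j = 1"
      using Gs_sign_eq[OF assms(2,3)] by simp
    moreover have "0 < Gs_sign n A i j \<longleftrightarrow> X = Y"
      using balancing_partition_complete_sign_pos_iff[OF P[unfolded complete] XY] .
    ultimately show "A i j = 1 \<longleftrightarrow> X = Y" by blast
  qed
  obtain P where "balancing_partition {..<n} Gs_edge (Gs_sign n A) P"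
    using assms(4) unfolding weakly_structurally_balanced_def by blast
  then show ?thesis using cliques by blast
qed

end
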